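(* Let $P:\{-1,1\}^k\to\{0,1\}$ be a predicate and $Q:\{-1,1\}^k\to\mathbb{R}$. Then $P$ is information-theoretically useless for $Q$ if and only if there exists a probability measure $\mu$ on $\{-1,1\}^k$ supported on $P^{-1}(1)$ such that $\mathrm{Opt}(Q,\mu)=E_Q$.
   Context: Boolean values are encoded as $\pm1$. An instance of Max-$P$ on variables $x_1,\dots,x_n$ consists of $m$ constraints; constraint $j$ is given by indices $a_j^1,\dots,a_j^k\in[n]$, pairwise distinct within the constraint, and signs $b_j^1,\dots,b_j^k\in\{-1,1\}$. For $x\in\{-1,1\}^n$, $x_{a_j}^{b_j}\in\{-1,1\}^k$ denotes the string with $i$-th coordinate $b_j^i x_{a_j^i}$. $E_Q=\mathbb{E}_{x\in\{-1,1\}^k}[Q(x)]$ for uniform $x$. $P$ is information-theoretically useless for $Q$ if for every $\epsilon>0$ there is an instance with $\max_x\frac1m\sum_j P(x_{a_j}^{b_j})=1$ and $\max_x\frac1m\sum_j Q(x_{a_j}^{b_j})\le E_Q+\epsilon$. For a probability measure $\mu$ on $\{-1,1\}^k$ and $p\in[0,1]$, $\mu^p$ is the distribution obtained by sampling a string from $\mu$ and then independently flipping each coordinate with probability $p$. $\mathrm{Opt}(Q,\mu)=\max_{p\in[0,1]}\mathbb{E}_{x\sim\mu^p}[Q(x)]$. *)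

theory Defs
  imports "HOL-Probability.Probability"
begin

definition cube :: "nat \<Rightarrow> int list set" where
  "cube k = {x. length x = k \<and> set x \<subseteq> {-1, 1}}"

definition valid_constraint :: "nat \<Rightarrow> nat \<Rightarrow> nat list \<times> int list \<Rightarrow> bool" where
  "valid_constraint k n c \<longleftrightarrow> length (fst c) = k \<and> length (snd c) = k \<and>
     distinct (fst c) \<and> set (fst c) \<subseteq> {..<n} \<and> set (snd c) \<subseteq> {-1, 1}"

definition valid_instance :: "nat \<Rightarrow> nat \<Rightarrow> (nat list \<times> int list) list \<Rightarrow> bool" where
  "valid_instance k n I \<longleftrightarrow> I \<noteq> [] \<and> (\<forall>c\<in>set I. valid_constraint k n c)"

definition restrict_str :: "int list \<Rightarrow> nat list \<times> int list \<Rightarrow> int list" where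
  "restrict_str x c = map2 (\<lambda>ai bi. bi * x ! ai) (fst c) (snd c)"

definition inst_value :: "(int list \<Rightarrow> real) \<Rightarrow> (nat list \<times> int list) list \<Rightarrow> int list \<Rightarrow> real" where
  "inst_value F I x = (\<Sum>c\<leftarrow>I. F (restrict_str x c)) / real (length I)"

definition inst_opt :: "nat \<Rightarrow> (int list \<Rightarrow> real) \<Rightarrow> (nat list \<times> int list) list \<Rightarrow> real" where
  "inst_opt n F I = Max ((inst_value F I) ` cube n)"

definition E_unif :: "nat \<Rightarrow> (int list \<Rightarrow> real) \<Rightarrow> real" where
  "E_unif k Q = (\<Sum>x\<in>cube k. Q x) / 2 ^ k"

definition useless :: "nat \<Rightarrow> (int list \<Rightarrow> real) \<Rightarrow> (int list \<Rightarrow> real) \<Rightarrow> bool" where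
  "useless k P Q \<longleftrightarrow> (\<forall>\<epsilon>>0. \<exists>n I. valid_instance k n I \<and>
      inst_opt n P I = 1 \<and> inst_opt n Q I \<le> E_unif k Q + \<epsilon>)"

fun flip_pmf :: "real \<Rightarrow> int list \<Rightarrow> int list pmf" where
  "flip_pmf p [] = return_pmf []"
| "flip_pmf p (c # cs) =
     bind_pmf (bernoulli_pmf p) (\<lambda>f. map_pmf (\<lambda>ys. (if f then - c else c) # ys) (flip_pmf p cs))"

definition noisy :: "int list pmf \<Rightarrow> real \<Rightarrow> int list pmf" where
  "noisy \<mu> p = bind_pmf \<mu> (flip_pmf p)"

definition Opt :: "(int list \<Rightarrow> real) \<Rightarrow> int list pmf \<Rightarrow> real" where
  "Opt Q \<mu> = (SUP p\<in>{0..1}. measure_pmf.expectation (noisy \<mu> p) Q)"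

end

theory Submission
  imports Defs
begin

text \<open>
  If \<open>P\<close> is useless, a near-optimal instance has an assignment \<open>x\<close> satisfying every
  constraint. Restricting \<open>x\<close> to a uniformly random constraint gives a distribution
  \<open>\<mu>\<close> on \<open>P\<^sup>-\<^sup>1(1)\<close>; since noise commutes with restriction to distinct indices, the
  \<open>Q\<close>-value of \<open>\<mu>\<^sup>p\<close> is the expected instance value of a \<open>p\<close>-noisy copy of \<open>x\<close>, hence at
  most the \<open>Q\<close>-optimum of the instance, i.e. \<open>E\<^sub>Q + \<epsilon>\<close>. A limit point of these
  distributions (the cube is finite) has \<open>Opt(Q, \<mu>) \<le> E\<^sub>Q\<close>, and \<open>p = 1/2\<close> always gives \<open>E\<^sub>Q\<close>.

  Conversely, given \<open>\<mu>\<close>, take \<open>n\<close> variables and, for every \<open>y\<close> in the support, about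
  \<open>N \<mu>(y)\<close> copies of each constraint \<open>(a, y)\<close> with \<open>a\<close> a tuple of distinct indices. The
  all-ones assignment satisfies all of them. For an assignment \<open>z\<close> with a fraction \<open>q\<close> of
  \<open>-1\<close> entries, averaging \<open>Q\<close> over all index tuples gives exactly the \<open>Q\<close>-value of \<open>y\<close> under
  \<open>q\<close>-noise, so the instance value is at most \<open>Opt(Q, \<mu>) = E\<^sub>Q\<close> up to the errors from rounding
  \<open>N \<mu>\<close> and from non-distinct tuples, which vanish as \<open>N, n \<rightarrow> \<infinity>\<close>.
\<close>

section \<open>Finitely supported distributions\<close>

lemma expectation_pmf_finite_support:
  fixes f :: "'a \<Rightarrow> real"
  assumes "finite A" "set_pmf M \<subseteq> A"
  shows "measure_pmf.expectation M f = (\<Sum>a\<in>A. pmf M a * f a)"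
  using assms by (subst integral_measure_pmf[of A]) auto

lemma expectation_bind_pmf_finite:
  fixes f :: "'b \<Rightarrow> real"
  assumes fM: "finite (set_pmf M)" and fN: "\<And>x. x \<in> set_pmf M \<Longrightarrow> finite (set_pmf (N x))"
  shows "measure_pmf.expectation (bind_pmf M N) f =
         measure_pmf.expectation M (\<lambda>x. measure_pmf.expectation (N x) f)"
proof -
  define B where "B = set_pmf (bind_pmf M N)"
  have fB: "finite B" unfolding B_def using fM fN by (auto simp: set_bind_pmf)
  have sub: "set_pmf (N a) \<subseteq> B" if "a \<in> set_pmf M" for a
    using that unfolding B_def by (auto simp: set_bind_pmf)
  have "measure_pmf.expectation (bind_pmf M N) f = (\<Sum>b\<in>B. pmf (bind_pmf M N) b * f b)"
    using fB by (intro expectation_pmf_finite_support) (auto simp: B_def)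
  also have "\<dots> = (\<Sum>b\<in>B. (\<Sum>a\<in>set_pmf M. pmf M a * pmf (N a) b) * f b)"
    by (intro sum.cong refl, subst pmf_bind, subst expectation_pmf_finite_support[OF fM]) auto
  also have "\<dots> = (\<Sum>a\<in>set_pmf M. pmf M a * (\<Sum>b\<in>B. pmf (N a) b * f b))"
    by (simp add: sum_distrib_left sum_distrib_right mult_ac sum.swap[of _ B])
  also have "\<dots> = (\<Sum>a\<in>set_pmf M. pmf M a * measure_pmf.expectation (N a) f)"
    using fB sub by (intro sum.cong refl) (simp add: expectation_pmf_finite_support)
  also have "\<dots> = measure_pmf.expectation M (\<lambda>x. measure_pmf.expectation (N x) f)"
    using fM by (simp add: expectation_pmf_finite_support[OF fM])
  finally show ?thesis .
qed

lemma expectation_tendsto_pmf_finite_support: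
  fixes f :: "'a \<Rightarrow> real"
  assumes "finite A" "\<And>N. set_pmf (M N) \<subseteq> A" "set_pmf M' \<subseteq> A"
    and "\<And>a. a \<in> A \<Longrightarrow> (\<lambda>N. pmf (M N) a) \<longlonglongrightarrow> pmf M' a"
  shows "(\<lambda>N. measure_pmf.expectation (M N) f) \<longlonglongrightarrow> measure_pmf.expectation M' f"
  using assms by (simp add: expectation_pmf_finite_support[of A] tendsto_sum tendsto_mult_right)

lemma finite_family_convergent_subseq:
  fixes f :: "nat \<Rightarrow> 'a \<Rightarrow> real"
  assumes "finite A" "\<And>N a. a \<in> A \<Longrightarrow> \<bar>f N a\<bar> \<le> C"
  shows "\<exists>r. strict_mono r \<and> (\<forall>a\<in>A. convergent (\<lambda>N. f (r N) a))"
  using assms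
proof (induction A rule: finite_induct)
  case empty
  show ?case by (intro exI[of _ id]) (auto simp: strict_mono_def)
next
  case (insert a A)
  then obtain r where r: "strict_mono r" "\<forall>b\<in>A. convergent (\<lambda>N. f (r N) b)" by auto
  have "bounded (range (\<lambda>N. f (r N) a))"
    using insert.prems by (intro boundedI[of _ C]) auto
  then obtain l s where s: "strict_mono s" "((\<lambda>N. f (r N) a) \<circ> s) \<longlonglongrightarrow> l"
    using bounded_imp_convergent_subsequence by blast
  have "convergent (\<lambda>N. f ((r \<circ> s) N) b)" if "b \<in> insert a A" for b
  proof (cases "b = a")
    case True
    then show ?thesis using s by (auto simp: convergent_def o_def)
  next
    case False
    with that obtain L where "(\<lambda>N. f (r N) b) \<longlonglongrightarrow> L" using r by (auto simp: convergent_def)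
    from LIMSEQ_subseq_LIMSEQ[OF this s(1)] show ?thesis by (auto simp: convergent_def o_def)
  qed
  moreover have "strict_mono (r \<circ> s)" using r(1) s(1) by (rule strict_mono_o)
  ultimately show ?case by blast
qed

lemma pmf_seq_convergent_subseq:
  fixes M :: "nat \<Rightarrow> 'a pmf"
  assumes fin: "finite S" and supp: "\<And>N. set_pmf (M N) \<subseteq> S"
  obtains r M' where "strict_mono r" "set_pmf M' \<subseteq> S"
    "\<And>a. (\<lambda>N. pmf (M (r N)) a) \<longlonglongrightarrow> pmf M' a"
proof -
  obtain r where r: "strict_mono r" "\<forall>a\<in>S. convergent (\<lambda>N. pmf (M (r N)) a)"
    using finite_family_convergent_subseq[of S "\<lambda>N a. pmf (M N) a" 1] fin by (auto simp: pmf_le_1)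
  define g where "g a = (if a \<in> S then lim (\<lambda>N. pmf (M (r N)) a) else 0)" for a
  have conv: "(\<lambda>N. pmf (M (r N)) a) \<longlonglongrightarrow> g a" for a
  proof (cases "a \<in> S")
    case True
    then show ?thesis using r(2) unfolding g_def convergent_LIMSEQ_iff by auto
  next
    case False
    then have "pmf (M (r N)) a = 0" for N using supp by (meson pmf_eq_0_set_pmf subsetD)
    then show ?thesis using False by (simp add: g_def)
  qed
  have g_nonneg: "0 \<le> g a" for a
    using LIMSEQ_le_const[OF conv[of a], of 0] by auto
  have "(\<lambda>N. \<Sum>a\<in>S. pmf (M (r N)) a) \<longlonglongrightarrow> (\<Sum>a\<in>S. g a)"
    by (intro tendsto_sum conv)
  moreover have "(\<Sum>a\<in>S. pmf (M (r N)) a) = 1" for N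
    using fin supp by (rule sum_pmf_eq_1)
  ultimately have sum_g: "(\<Sum>a\<in>S. g a) = 1" using LIMSEQ_unique[OF _ tendsto_const] by force
  have "(\<integral>\<^sup>+a. ennreal (g a) \<partial>count_space UNIV) = (\<Sum>a\<in>S. ennreal (g a))"
    using fin by (intro nn_integral_count_space') (auto simp: g_def)
  also have "\<dots> = ennreal (\<Sum>a\<in>S. g a)"
    by (rule sum_ennreal) (rule g_nonneg)
  finally have "(\<integral>\<^sup>+a. ennreal (g a) \<partial>count_space UNIV) = 1"
    by (simp add: sum_g)
  then have pmf_g: "pmf (embed_pmf g) a = g a" for a
    using g_nonneg by (intro pmf_embed_pmf)
  have "set_pmf (embed_pmf g) \<subseteq> S"
    by (auto simp: set_pmf_iff pmf_g g_def split: if_splits)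
  then show thesis using that r(1) conv by (simp add: pmf_g)
qed

section \<open>The cube, noise and \<open>Opt\<close>\<close>

lemma finite_cube: "finite (cube k)"
proof -
  have "finite {xs. set xs \<subseteq> {-1,1::int} \<and> length xs = k}"
    by (rule finite_lists_length_eq) auto
  then show ?thesis unfolding cube_def by (rule finite_subset[rotated]) auto
qed

lemma replicate_one_in_cube: "replicate k 1 \<in> cube k"
  by (auto simp: cube_def)

lemma nth_cube: "x \<in> cube n \<Longrightarrow> i < n \<Longrightarrow> x ! i = 1 \<or> x ! i = -1"
  unfolding cube_def using nth_mem by fastforce

lemma cube_Suc: "cube (Suc k) = Cons 1 ` cube k \<union> Cons (-1) ` cube k"
proof
  show "cube (Suc k) \<subseteq> Cons 1 ` cube k \<union> Cons (-1) ` cube k"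
  proof
    fix z assume "z \<in> cube (Suc k)"
    then obtain c cs where "z = c # cs" "length cs = k" "c \<in> {-1,1}" "set cs \<subseteq> {-1,1}"
      unfolding cube_def by (cases z) auto
    then show "z \<in> Cons 1 ` cube k \<union> Cons (-1) ` cube k" unfolding cube_def by auto
  qed
qed (auto simp: cube_def)

lemma sum_cube_Suc:
  fixes f :: "int list \<Rightarrow> real"
  shows "(\<Sum>z\<in>cube (Suc k). f z) = (\<Sum>z\<in>cube k. f (1 # z)) + (\<Sum>z\<in>cube k. f (- 1 # z))"
  unfolding cube_Suc by (subst sum.union_disjoint) (auto simp: finite_cube sum.reindex)

definition cube_abs_sum :: "nat \<Rightarrow> (int list \<Rightarrow> real) \<Rightarrow> real" where
  "cube_abs_sum k Q = (\<Sum>z\<in>cube k. \<bar>Q z\<bar>)"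

lemma abs_le_cube_abs_sum: "z \<in> cube k \<Longrightarrow> \<bar>Q z\<bar> \<le> cube_abs_sum k Q"
  unfolding cube_abs_sum_def by (rule member_le_sum) (auto simp: finite_cube)

lemma abs_expectation_le_cube_abs_sum:
  fixes Q :: "int list \<Rightarrow> real"
  assumes "set_pmf M \<subseteq> cube k"
  shows "\<bar>measure_pmf.expectation M Q\<bar> \<le> cube_abs_sum k Q"
proof -
  have "\<bar>measure_pmf.expectation M Q\<bar> \<le> (\<Sum>z\<in>cube k. \<bar>pmf M z * Q z\<bar>)"
    unfolding expectation_pmf_finite_support[OF finite_cube assms] by (rule sum_abs)
  also have "\<dots> \<le> (\<Sum>z\<in>cube k. pmf M z * cube_abs_sum k Q)"
    by (intro sum_mono) (auto simp: abs_mult intro: mult_left_mono abs_le_cube_abs_sum)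
  also have "\<dots> = cube_abs_sum k Q"
    using assms by (simp add: sum_distrib_right[symmetric] sum_pmf_eq_1 finite_cube)
  finally show ?thesis .
qed

lemma set_flip_pmf:
  "z \<in> set_pmf (flip_pmf p y) \<Longrightarrow> length z = length y \<and> (\<forall>u\<in>set z. u \<in> set y \<or> - u \<in> set y)"
proof (induction y arbitrary: z)
  case (Cons c cs)
  then show ?case by (auto simp: set_bind_pmf) (metis Cons.IH)+
qed auto

lemma finite_set_flip_pmf: "finite (set_pmf (flip_pmf p y))"
proof -
  have "finite {z. set z \<subseteq> set y \<union> uminus ` set y \<and> length z = length y}"
    by (rule finite_lists_length_eq) auto
  moreover have "set_pmf (flip_pmf p y) \<subseteq> {z. set z \<subseteq> set y \<union> uminus ` set y \<and> length z = length y}"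
    using set_flip_pmf[of _ p y] by (force simp: image_iff)
  ultimately show ?thesis by (rule finite_subset[rotated])
qed

lemma set_flip_pmf_cube: "y \<in> cube k \<Longrightarrow> set_pmf (flip_pmf p y) \<subseteq> cube k"
  using set_flip_pmf[of _ p y] unfolding cube_def by fastforce

lemma expectation_flip_pmf_Cons:
  fixes f :: "int list \<Rightarrow> real"
  assumes "0 \<le> p" "p \<le> 1"
  shows "measure_pmf.expectation (flip_pmf p (c # cs)) f =
     (1 - p) * measure_pmf.expectation (flip_pmf p cs) (\<lambda>ys. f (c # ys)) +
     p * measure_pmf.expectation (flip_pmf p cs) (\<lambda>ys. f (- c # ys))"
  using assms by (simp add: expectation_bind_pmf_finite finite_set_flip_pmf)

lemma expectation_flip_pmf_half:
  fixes Q :: "int list \<Rightarrow> real"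
  assumes "y \<in> cube k"
  shows "measure_pmf.expectation (flip_pmf (1/2) y) Q = E_unif k Q"
  using assms
proof (induction y arbitrary: k Q)
  case Nil
  then have "k = 0" "cube k = {[]}" by (auto simp: cube_def)
  then show ?case by (simp add: E_unif_def)
next
  case (Cons c cs)
  then obtain k' where k: "k = Suc k'" and cs: "cs \<in> cube k'" and c: "c = 1 \<or> c = -1"
    by (cases k) (auto simp: cube_def)
  have "measure_pmf.expectation (flip_pmf (1/2) (c # cs)) Q =
     (1/2) * E_unif k' (\<lambda>ys. Q (c # ys)) + (1/2) * E_unif k' (\<lambda>ys. Q (- c # ys))"
    by (subst expectation_flip_pmf_Cons) (auto simp: Cons.IH[OF cs])
  also have "\<dots> = E_unif k Q"
    using c unfolding E_unif_def k sum_cube_Suc by (auto simp: field_simps)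
  finally show ?case .
qed

lemma abs_E_unif_le_cube_abs_sum: "\<bar>E_unif k Q\<bar> \<le> cube_abs_sum k Q"
  using abs_expectation_le_cube_abs_sum[OF set_flip_pmf_cube] expectation_flip_pmf_half
    replicate_one_in_cube by metis

definition flip_at :: "(nat \<Rightarrow> bool) \<Rightarrow> int list \<Rightarrow> int list" where
  "flip_at s y = map (\<lambda>i. if s i then - (y ! i) else y ! i) [0..<length y]"

lemma flip_at_Nil [simp]: "flip_at s [] = []"
  by (simp add: flip_at_def)

lemma flip_at_Cons: "flip_at s (c # cs) = (if s 0 then - c else c) # flip_at (s \<circ> Suc) cs"
  unfolding flip_at_def by (simp add: map_upt_Suc del: upt_Suc)

lemma flip_pmf_eq_map_Pi_pmf:
  "flip_pmf p y = map_pmf (\<lambda>s. flip_at s y) (Pi_pmf {..<length y} False (\<lambda>_. bernoulli_pmf p))"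
proof (induction y)
  case Nil
  then show ?case by (simp add: map_pmf_def bind_return_pmf)
next
  case (Cons c cs)
  define B where "B = Pi_pmf (Suc ` {..<length cs}) False (\<lambda>_. bernoulli_pmf p)"
  have shift: "Pi_pmf {..<length cs} False (\<lambda>_. bernoulli_pmf p) = map_pmf (\<lambda>g. g \<circ> Suc) B"
    unfolding B_def by (rule Pi_pmf_bij_betw) (auto simp: bij_betw_def)
  have "{..<length (c # cs)} = insert 0 (Suc ` {..<length cs})"
    using lessThan_Suc_eq_insert_0 by auto
  then have "map_pmf (\<lambda>s. flip_at s (c # cs)) (Pi_pmf {..<length (c # cs)} False (\<lambda>_. bernoulli_pmf p))
      = bind_pmf (bernoulli_pmf p) (\<lambda>b. map_pmf (\<lambda>s. flip_at (s(0 := b)) (c # cs)) B)"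
    unfolding B_def by (simp add: Pi_pmf_insert' map_bind_pmf map_pmf_def[symmetric] pmf.map_comp o_def)
  also have "\<dots> = bind_pmf (bernoulli_pmf p)
      (\<lambda>b. map_pmf (\<lambda>ys. (if b then - c else c) # ys) (map_pmf (\<lambda>s. flip_at s cs) (map_pmf (\<lambda>g. g \<circ> Suc) B)))"
    by (intro bind_pmf_cong refl) (simp add: pmf.map_comp o_def flip_at_Cons)
  also have "\<dots> = flip_pmf p (c # cs)"
    using Cons.IH by (simp add: shift[symmetric])
  finally show ?case ..
qed

lemma nth_restrict_str:
  "j < length (fst c) \<Longrightarrow> j < length (snd c) \<Longrightarrow> restrict_str x c ! j = snd c ! j * x ! (fst c ! j)"
  by (simp add: restrict_str_def)

lemma restrict_str_in_cube:
  assumes "length a = k" "length b = k" "set a \<subseteq> {..<n}" "set b \<subseteq> {-1, 1}" "x \<in> cube n"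
  shows "restrict_str x (a, b) \<in> cube k"
proof -
  have len: "length (restrict_str x (a, b)) = k" using assms by (simp add: restrict_str_def)
  have "restrict_str x (a, b) ! j \<in> {-1, 1}" if j: "j < k" for j
  proof -
    have "b ! j \<in> {-1, 1}" using assms(2,4) j nth_mem by blast
    moreover have "a ! j < n" using assms(1,3) j nth_mem by blast
    then have "x ! (a ! j) = 1 \<or> x ! (a ! j) = -1" using assms(5) by (intro nth_cube)
    ultimately show ?thesis using assms(1,2) j by (auto simp: nth_restrict_str)
  qed
  then have "set (restrict_str x (a, b)) \<subseteq> {-1, 1}" using len by (metis in_set_conv_nth subsetI)
  with len show ?thesis by (simp add: cube_def)
qed

lemma restrict_str_in_cube_valid: "valid_constraint k n c \<Longrightarrow> x \<in> cube n \<Longrightarrow> restrict_str x c \<in> cube k"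
  using restrict_str_in_cube[of "fst c" k "snd c" n x] by (simp add: valid_constraint_def)

lemma flip_at_cong: "(\<And>i. i < length y \<Longrightarrow> s i = s' i) \<Longrightarrow> flip_at s y = flip_at s' y"
  by (simp add: flip_at_def)

lemma restrict_str_flip_at:
  assumes "length a = length b" "set a \<subseteq> {..<length x}"
  shows "restrict_str (flip_at s x) (a, b) = flip_at (\<lambda>j. s (a ! j)) (restrict_str x (a, b))"
proof (rule nth_equalityI)
  fix j assume "j < length (restrict_str (flip_at s x) (a, b))"
  then have j: "j < length a" using assms by (simp add: restrict_str_def)
  then have "a ! j < length x" using assms nth_mem by blast
  then show "restrict_str (flip_at s x) (a, b) ! j = flip_at (\<lambda>j. s (a ! j)) (restrict_str x (a, b)) ! j"
    using assms j by (simp add: restrict_str_def flip_at_def)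
qed (use assms in \<open>simp add: restrict_str_def flip_at_def\<close>)

text \<open>Distinctness of the indices is what makes the flips seen by the constraint independent.\<close>

lemma map_restrict_str_flip_pmf:
  assumes v: "valid_constraint k n c" and x: "length x = n"
  shows "map_pmf (\<lambda>z. restrict_str z c) (flip_pmf p x) = flip_pmf p (restrict_str x c)"
proof -
  obtain a b where c: "c = (a, b)" by (cases c)
  have la: "length a = k" and lb: "length b = k" and da: "distinct a" and sa: "set a \<subseteq> {..<n}"
    using v c unfolding valid_constraint_def by auto
  define h where "h j = (if j < k then a ! j else n + j)" for j
  have "bij_betw ((!) a) {..<k} (set a)" using bij_betw_nth[OF da] la by auto
  then have "bij_betw h {..<k} (set a)" by (rule bij_betw_cong[THEN iffD1, rotated]) (auto simp: h_def)
  moreover have "h j \<notin> set a" if "j \<notin> {..<k}" for j using that sa by (auto simp: h_def)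
  ultimately have "Pi_pmf {..<k} False (\<lambda>_. bernoulli_pmf p) =
      map_pmf (\<lambda>g. g \<circ> h) (Pi_pmf (set a) False (\<lambda>_. bernoulli_pmf p))"
    by (intro Pi_pmf_bij_betw) auto
  also have "Pi_pmf (set a) False (\<lambda>_. bernoulli_pmf p) =
      map_pmf (\<lambda>s i. if i \<in> set a then s i else False) (Pi_pmf {..<n} False (\<lambda>_. bernoulli_pmf p))"
    using sa by (intro Pi_pmf_subset) auto
  finally have coins: "Pi_pmf {..<k} False (\<lambda>_. bernoulli_pmf p) =
      map_pmf (\<lambda>s. (\<lambda>i. if i \<in> set a then s i else False) \<circ> h) (Pi_pmf {..<n} False (\<lambda>_. bernoulli_pmf p))"
    by (simp add: pmf.map_comp o_def)
  have "flip_at (\<lambda>j. s (a ! j)) (restrict_str x c) =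
      flip_at ((\<lambda>i. if i \<in> set a then s i else False) \<circ> h) (restrict_str x c)" for s
    using la lb c by (intro flip_at_cong) (auto simp: h_def restrict_str_def)
  moreover have "restrict_str (flip_at s x) c = flip_at (\<lambda>j. s (a ! j)) (restrict_str x c)" for s
    using la lb sa x c by (simp add: restrict_str_flip_at)
  ultimately show ?thesis
    using la lb c x by (simp add: flip_pmf_eq_map_Pi_pmf coins pmf.map_comp o_def restrict_str_def)
qed

lemma set_pmf_noisy_cube: "set_pmf \<mu> \<subseteq> cube k \<Longrightarrow> set_pmf (noisy \<mu> p) \<subseteq> cube k"
  unfolding noisy_def using set_flip_pmf_cube by (fastforce simp: set_bind_pmf)

lemma expectation_noisy:
  fixes Q :: "int list \<Rightarrow> real"
  assumes "finite (set_pmf \<mu>)"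
  shows "measure_pmf.expectation (noisy \<mu> p) Q =
    measure_pmf.expectation \<mu> (\<lambda>y. measure_pmf.expectation (flip_pmf p y) Q)"
  unfolding noisy_def using assms by (rule expectation_bind_pmf_finite[OF _ finite_set_flip_pmf])

lemma expectation_noisy_le_Opt:
  assumes "set_pmf \<mu> \<subseteq> cube k" "p \<in> {0..1}"
  shows "measure_pmf.expectation (noisy \<mu> p) Q \<le> Opt Q \<mu>"
  unfolding Opt_def
proof (rule cSUP_upper[OF assms(2)])
  show "bdd_above ((\<lambda>p. measure_pmf.expectation (noisy \<mu> p) Q) ` {0..1})"
    using abs_expectation_le_cube_abs_sum[OF set_pmf_noisy_cube[OF assms(1)], of _ Q]
    by (intro bdd_aboveI[of _ "cube_abs_sum k Q"]) (auto simp: abs_le_iff)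
qed

lemma Opt_le:
  assumes "\<And>p. p \<in> {0..1} \<Longrightarrow> measure_pmf.expectation (noisy \<mu> p) Q \<le> C"
  shows "Opt Q \<mu> \<le> C"
  unfolding Opt_def by (rule cSUP_least) (use assms in auto)

lemma E_unif_le_Opt:
  assumes "set_pmf \<mu> \<subseteq> cube k"
  shows "E_unif k Q \<le> Opt Q \<mu>"
proof -
  have "measure_pmf.expectation (noisy \<mu> (1/2)) Q =
      (\<Sum>y\<in>cube k. pmf \<mu> y * measure_pmf.expectation (flip_pmf (1/2) y) Q)"
    using finite_subset[OF assms finite_cube]
    by (simp add: expectation_noisy expectation_pmf_finite_support[OF finite_cube assms])
  also have "\<dots> = (\<Sum>y\<in>cube k. pmf \<mu> y * E_unif k Q)"
    by (intro sum.cong refl) (simp add: expectation_flip_pmf_half)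
  also have "\<dots> = E_unif k Q"
    by (simp add: sum_distrib_right[symmetric] sum_pmf_eq_1[OF finite_cube assms])
  finally show ?thesis using expectation_noisy_le_Opt[OF assms, of "1/2" Q] by simp
qed

lemma inst_value_le_inst_opt: "z \<in> cube n \<Longrightarrow> inst_value F I z \<le> inst_opt n F I"
  unfolding inst_opt_def by (rule Max_ge) (auto simp: finite_cube)

lemma inst_opt_attained: "\<exists>z\<in>cube n. inst_value F I z = inst_opt n F I"
proof -
  have "cube n \<noteq> {}" using replicate_one_in_cube by blast
  then have "inst_opt n F I \<in> inst_value F I ` cube n"
    unfolding inst_opt_def by (intro Max_in) (auto simp: finite_cube)
  then show ?thesis by auto
qed

lemma inst_opt_le: "(\<And>z. z \<in> cube n \<Longrightarrow> inst_value F I z \<le> C) \<Longrightarrow> inst_opt n F I \<le> C"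
proof -
  assume "\<And>z. z \<in> cube n \<Longrightarrow> inst_value F I z \<le> C"
  moreover obtain z where "z \<in> cube n" "inst_value F I z = inst_opt n F I"
    using inst_opt_attained by blast
  ultimately show ?thesis by force
qed

section \<open>A useless predicate yields a noise-stable distribution\<close>

definition restriction_pmf :: "int list \<Rightarrow> (nat list \<times> int list) list \<Rightarrow> int list pmf" where
  "restriction_pmf x I = map_pmf (\<lambda>j. restrict_str x (I ! j)) (pmf_of_set {..<length I})"

lemma set_restriction_pmf:
  "I \<noteq> [] \<Longrightarrow> set_pmf (restriction_pmf x I) = (\<lambda>c. restrict_str x c) ` set I"
proof -
  assume "I \<noteq> []"
  moreover have "set I = (!) I ` {..<length I}"
    using nth_image[of "length I" I] by (simp add: atLeast0LessThan)
  ultimately show ?thesis by (simp add: restriction_pmf_def lessThan_empty_iff image_image)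
qed

lemma expectation_noisy_restriction_pmf:
  fixes Q :: "int list \<Rightarrow> real"
  assumes v: "valid_instance k n I" and x: "length x = n"
  shows "measure_pmf.expectation (noisy (restriction_pmf x I) p) Q =
    measure_pmf.expectation (flip_pmf p x) (inst_value Q I)"
proof -
  define m where "m = length I"
  have m: "{..<m} \<noteq> {}" using v by (auto simp: valid_instance_def m_def lessThan_empty_iff)
  have vc: "valid_constraint k n (I ! j)" if "j < m" for j
    using v that unfolding valid_instance_def m_def by auto
  have int: "integrable (measure_pmf (flip_pmf p x)) f" for f :: "int list \<Rightarrow> real"
    by (rule integrable_measure_pmf_finite[OF finite_set_flip_pmf])
  have "measure_pmf.expectation (noisy (restriction_pmf x I) p) Q =
      (\<Sum>j<m. measure_pmf.expectation (flip_pmf p (restrict_str x (I ! j))) Q) / real m"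
    unfolding noisy_def restriction_pmf_def bind_map_pmf m_def[symmetric] using m
    by (subst expectation_bind_pmf_finite) (auto simp: finite_set_flip_pmf integral_pmf_of_set)
  also have "\<dots> = (\<Sum>j<m. measure_pmf.expectation (flip_pmf p x) (\<lambda>z. Q (restrict_str z (I ! j)))) / real m"
    by (simp add: map_restrict_str_flip_pmf[OF vc x, symmetric])
  also have "\<dots> = measure_pmf.expectation (flip_pmf p x) (\<lambda>z. (\<Sum>j<m. Q (restrict_str z (I ! j))) / real m)"
    by (simp add: Bochner_Integration.integral_sum int)
  also have "(\<lambda>z. (\<Sum>j<m. Q (restrict_str z (I ! j))) / real m) = inst_value Q I"
    by (simp add: fun_eq_iff inst_value_def sum_list_sum_nth atLeast0LessThan m_def)
  finally show ?thesis .
qed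

lemma expectation_noisy_restriction_pmf_le_inst_opt:
  assumes "valid_instance k n I" "x \<in> cube n"
  shows "measure_pmf.expectation (noisy (restriction_pmf x I) p) Q \<le> inst_opt n Q I"
proof -
  have "AE z in flip_pmf p x. inst_value Q I z \<le> inst_opt n Q I"
    using set_flip_pmf_cube[OF assms(2)] by (auto simp: AE_measure_pmf_iff intro: inst_value_le_inst_opt)
  then show ?thesis
    using assms by (simp add: expectation_noisy_restriction_pmf cube_def
        measure_pmf.integral_le_const integrable_measure_pmf_finite finite_set_flip_pmf)
qed

lemma sum_list_eq_length_imp_eq_1:
  fixes f :: "'a \<Rightarrow> real"
  assumes "(\<Sum>c\<leftarrow>I. f c) = real (length I)" "\<And>c. c \<in> set I \<Longrightarrow> f c \<le> 1" "c \<in> set I"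
  shows "f c = 1"
  using assms
proof (induction I)
  case (Cons a I)
  have "(\<Sum>c\<leftarrow>I. f c) \<le> (\<Sum>c\<leftarrow>I. 1)" using Cons.prems(2) by (intro sum_list_mono) auto
  then have "f a = 1 \<and> (\<Sum>c\<leftarrow>I. f c) = real (length I)"
    using Cons.prems(1) Cons.prems(2)[of a] by (simp add: sum_list_triv)
  then show ?case using Cons by auto
qed simp

lemma useless_imp_near_optimal_pmf:
  fixes P Q :: "int list \<Rightarrow> real"
  assumes P01: "\<forall>x\<in>cube k. P x \<in> {0, 1}" and "useless k P Q" and "e > 0"
  shows "\<exists>\<mu>. set_pmf \<mu> \<subseteq> {x \<in> cube k. P x = 1} \<and>
    (\<forall>p. measure_pmf.expectation (noisy \<mu> p) Q \<le> E_unif k Q + e)"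
proof -
  obtain n I where v: "valid_instance k n I" and "inst_opt n P I = 1"
    and optQ: "inst_opt n Q I \<le> E_unif k Q + e"
    using assms unfolding useless_def by blast
  then obtain x where x: "x \<in> cube n" and "inst_value P I x = 1"
    using inst_opt_attained[of n P I] by auto
  then have sum: "(\<Sum>c\<leftarrow>I. P (restrict_str x c)) = real (length I)"
    using v by (simp add: inst_value_def valid_instance_def field_simps)
  have in_cube: "restrict_str x c \<in> cube k" if "c \<in> set I" for c
    using v x that by (auto simp: valid_instance_def intro: restrict_str_in_cube_valid)
  then have "P (restrict_str x c) \<le> 1" if "c \<in> set I" for c
    using P01 that by fastforce
  then have "P (restrict_str x c) = 1" if "c \<in> set I" for c
    using sum_list_eq_length_imp_eq_1[of "\<lambda>c. P (restrict_str x c)", OF sum _ that] by blast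
  then have "set_pmf (restriction_pmf x I) \<subseteq> {x \<in> cube k. P x = 1}"
    using v in_cube by (auto simp: set_restriction_pmf valid_instance_def)
  moreover have "measure_pmf.expectation (noisy (restriction_pmf x I) p) Q \<le> E_unif k Q + e" for p
    using expectation_noisy_restriction_pmf_le_inst_opt[OF v x] optQ by (rule order_trans)
  ultimately show ?thesis by blast
qed

lemma useless_imp_Opt_eq_E_unif:
  fixes P Q :: "int list \<Rightarrow> real"
  assumes P01: "\<forall>x\<in>cube k. P x \<in> {0, 1}" and useless: "useless k P Q"
  shows "\<exists>\<mu>. set_pmf \<mu> \<subseteq> {x \<in> cube k. P x = 1} \<and> Opt Q \<mu> = E_unif k Q"
proof -
  define S where "S = {x \<in> cube k. P x = 1}"
  have S: "finite S" "S \<subseteq> cube k" using finite_cube by (auto simp: S_def)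
  have "\<forall>N. \<exists>\<mu>. set_pmf \<mu> \<subseteq> S \<and>
      (\<forall>p. measure_pmf.expectation (noisy \<mu> p) Q \<le> E_unif k Q + inverse (real (Suc N)))"
    unfolding S_def by (intro allI useless_imp_near_optimal_pmf[OF P01 useless]) simp
  then obtain M where M: "\<forall>N. set_pmf (M N) \<subseteq> S \<and>
      (\<forall>p. measure_pmf.expectation (noisy (M N) p) Q \<le> E_unif k Q + inverse (real (Suc N)))"
    unfolding choice_iff by blast
  then have M_supp: "\<And>N. set_pmf (M N) \<subseteq> S" and M_bound:
    "\<And>N p. measure_pmf.expectation (noisy (M N) p) Q \<le> E_unif k Q + inverse (real (Suc N))"
    by auto
  obtain r \<mu> where r: "strict_mono r" and \<mu>: "set_pmf \<mu> \<subseteq> S"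
    and conv: "\<And>y. (\<lambda>N. pmf (M (r N)) y) \<longlonglongrightarrow> pmf \<mu> y"
    by (rule pmf_seq_convergent_subseq[where M = M, OF S(1) M_supp]) blast
  have "measure_pmf.expectation (noisy \<mu> p) Q \<le> E_unif k Q" for p
  proof (rule LIMSEQ_le)
    have noisy_eq: "measure_pmf.expectation (noisy \<nu> p) Q =
        measure_pmf.expectation \<nu> (\<lambda>y. measure_pmf.expectation (flip_pmf p y) Q)"
      if "set_pmf \<nu> \<subseteq> S" for \<nu>
      using finite_subset[OF that S(1)] by (rule expectation_noisy)
    show "(\<lambda>N. measure_pmf.expectation (noisy (M (r N)) p) Q) \<longlonglongrightarrow> measure_pmf.expectation (noisy \<mu> p) Q"
      unfolding noisy_eq[OF M_supp] noisy_eq[OF \<mu>]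
      by (rule expectation_tendsto_pmf_finite_support[OF S(1) M_supp \<mu> conv])
    have "((\<lambda>N. inverse (real (Suc N))) \<circ> r) \<longlonglongrightarrow> 0"
      using LIMSEQ_subseq_LIMSEQ[OF LIMSEQ_inverse_real_of_nat r] .
    then show "(\<lambda>N. E_unif k Q + inverse (real (Suc (r N)))) \<longlonglongrightarrow> E_unif k Q"
      using tendsto_add[OF tendsto_const, of _ 0 sequentially "E_unif k Q"] by (simp add: o_def)
  qed (use M_bound in auto)
  then have "Opt Q \<mu> \<le> E_unif k Q" by (rule Opt_le)
  moreover have "E_unif k Q \<le> Opt Q \<mu>" using \<mu> S(2) by (intro E_unif_le_Opt) auto
  ultimately show ?thesis using \<mu> unfolding S_def by auto
qed

section \<open>A noise-stable distribution yields useless instances\<close>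

definition index_tuples :: "nat \<Rightarrow> nat \<Rightarrow> nat list set" where
  "index_tuples k n = {a. set a \<subseteq> {..<n} \<and> length a = k}"

definition distinct_index_tuples :: "nat \<Rightarrow> nat \<Rightarrow> nat list set" where
  "distinct_index_tuples k n = {a. length a = k \<and> distinct a \<and> set a \<subseteq> {..<n}}"

definition neg_fraction :: "nat \<Rightarrow> int list \<Rightarrow> real" where
  "neg_fraction n x = real (card {i\<in>{..<n}. x ! i = -1}) / real n"

lemma finite_index_tuples: "finite (index_tuples k n)"
  unfolding index_tuples_def by (rule finite_lists_length_eq) auto

lemma card_index_tuples: "card (index_tuples k n) = n ^ k"
  unfolding index_tuples_def by (subst card_lists_length_eq) auto

lemma distinct_index_tuples_subset: "distinct_index_tuples k n \<subseteq> index_tuples k n"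
  unfolding distinct_index_tuples_def index_tuples_def by auto

lemma finite_distinct_index_tuples: "finite (distinct_index_tuples k n)"
  using finite_subset[OF distinct_index_tuples_subset finite_index_tuples] .

lemma card_distinct_index_tuples_le: "card (distinct_index_tuples k n) \<le> n ^ k"
  using card_mono[OF finite_index_tuples distinct_index_tuples_subset] by (simp add: card_index_tuples)

lemma card_distinct_index_tuples_ge:
  assumes "k \<le> n"
  shows "(n - k) ^ k \<le> card (distinct_index_tuples k n)"
proof -
  have "card (distinct_index_tuples k n) = \<Prod>{n - k + 1 .. n}"
    unfolding distinct_index_tuples_def using card_lists_distinct_length_eq[of "{..<n}" k] assms by simp
  moreover have "(\<Prod>i\<in>{n - k + 1 .. n}. n - k) \<le> (\<Prod>i\<in>{n - k + 1 .. n}. i)"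
    by (intro prod_mono) auto
  ultimately show ?thesis using assms by simp
qed

lemma tendsto_card_distinct_index_tuples:
  "(\<lambda>n. real (card (distinct_index_tuples k n)) / real n ^ k) \<longlonglongrightarrow> 1"
proof (rule real_tendsto_sandwich)
  have "(\<lambda>n. (1 - real k / real n) ^ k) \<longlonglongrightarrow> (1 - 0) ^ k"
    by (intro tendsto_power tendsto_diff tendsto_const lim_const_over_n)
  moreover have "\<forall>\<^sub>F n in sequentially. (1 - real k / real n) ^ k = real (n - k) ^ k / real n ^ k"
  proof (rule eventually_sequentiallyI[of "Suc k"])
    fix n assume "Suc k \<le> n"
    then show "(1 - real k / real n) ^ k = real (n - k) ^ k / real n ^ k"
      by (simp add: of_nat_diff field_simps power_divide)
  qed
  ultimately show "(\<lambda>n. real (n - k) ^ k / real n ^ k) \<longlonglongrightarrow> 1"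
    by (simp add: tendsto_cong)
  show "\<forall>\<^sub>F n in sequentially. real (n - k) ^ k / real n ^ k \<le> real (card (distinct_index_tuples k n)) / real n ^ k"
    using eventually_ge_at_top[of k]
    by eventually_elim (intro divide_right_mono, metis card_distinct_index_tuples_ge of_nat_le_iff of_nat_power, simp)
  show "\<forall>\<^sub>F n in sequentially. real (card (distinct_index_tuples k n)) / real n ^ k \<le> 1"
  proof (rule eventually_sequentiallyI[of 1])
    fix n :: nat assume "1 \<le> n"
    moreover have "real (card (distinct_index_tuples k n)) \<le> real n ^ k"
      by (metis card_distinct_index_tuples_le of_nat_le_iff of_nat_power)
    ultimately show "real (card (distinct_index_tuples k n)) / real n ^ k \<le> 1"
      by (simp add: divide_le_eq_1)
  qed
qed (rule tendsto_const)

lemma restrict_str_Cons: "restrict_str x (i # a, c # cs) = (c * x ! i) # restrict_str x (a, cs)"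
  by (simp add: restrict_str_def)

lemma restrict_str_replicate_one:
  "length a = length y \<Longrightarrow> set a \<subseteq> {..<n} \<Longrightarrow> restrict_str (replicate n 1) (a, y) = y"
  by (induction a y rule: list_induct2) (auto simp: restrict_str_def)

lemma neg_fraction_bounds: "n > 0 \<Longrightarrow> 0 \<le> neg_fraction n x \<and> neg_fraction n x \<le> 1"
  using card_mono[of "{..<n}" "{i\<in>{..<n}. x ! i = -1}"] by (auto simp: neg_fraction_def)

lemma sum_nth_cube:
  fixes h :: "int \<Rightarrow> real"
  assumes x: "x \<in> cube n"
  shows "(\<Sum>i<n. h (x ! i)) = real n * ((1 - neg_fraction n x) * h 1 + neg_fraction n x * h (-1))"
proof -
  define A where "A = {i\<in>{..<n}. x ! i = -1}"
  have A: "A \<subseteq> {..<n}" "card A \<le> n" using card_mono[of "{..<n}" A] by (auto simp: A_def)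
  have "(\<Sum>i<n. h (x ! i)) = (\<Sum>i\<in>A. h (x ! i)) + (\<Sum>i\<in>{..<n} - A. h (x ! i))"
    using sum.subset_diff[OF A(1), of "\<lambda>i. h (x ! i)"] by (simp add: add.commute)
  also have "\<dots> = (\<Sum>i\<in>A. h (-1)) + (\<Sum>i\<in>{..<n} - A. h 1)"
    using nth_cube[OF x] by (intro arg_cong2[where f = "(+)"] sum.cong) (auto simp: A_def, metis)
  also have "\<dots> = real (card A) * h (-1) + (real n - real (card A)) * h 1"
    using A by (simp add: card_Diff_subset finite_subset of_nat_diff)
  also have "real (card A) = real n * neg_fraction n x"
    using A by (cases "n = 0") (auto simp: neg_fraction_def A_def)
  finally show ?thesis by (simp add: algebra_simps)
qed

text \<open>Over all index tuples each coordinate is read independently and uniformly from \<open>x\<close>,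
  so it equals \<open>-1\<close> with probability \<open>neg_fraction n x\<close>.\<close>

lemma sum_index_tuples_restrict_str:
  fixes Q :: "int list \<Rightarrow> real"
  assumes x: "x \<in> cube n" and n: "n > 0"
  shows "length y = k \<Longrightarrow> (\<Sum>a\<in>index_tuples k n. Q (restrict_str x (a, y))) =
     real n ^ k * measure_pmf.expectation (flip_pmf (neg_fraction n x) y) Q"
proof (induction y arbitrary: k Q)
  case Nil
  then have "k = 0" "index_tuples k n = {[]}" by (auto simp: index_tuples_def)
  then show ?case by (simp add: restrict_str_def)
next
  case (Cons c cs)
  then obtain k' where k: "k = Suc k'" and cs: "length cs = k'" by auto
  define q where "q = neg_fraction n x"
  define G where "G b = measure_pmf.expectation (flip_pmf q cs) (\<lambda>z. Q (b # z))" for b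
  have "(\<Sum>a\<in>index_tuples k n. Q (restrict_str x (a, c # cs))) =
        (\<Sum>(a, i)\<in>index_tuples k' n \<times> {..<n}. Q (restrict_str x (i # a, c # cs)))"
    unfolding k index_tuples_def lists_length_Suc_eq
    by (subst sum.reindex[OF inj_split_Cons]) (simp add: case_prod_unfold)
  also have "\<dots> = (\<Sum>i<n. \<Sum>a\<in>index_tuples k' n. Q ((c * x ! i) # restrict_str x (a, cs)))"
    by (subst sum.swap) (simp add: sum.cartesian_product restrict_str_Cons)
  also have "\<dots> = (\<Sum>i<n. real n ^ k' * G (c * x ! i))"
    unfolding G_def q_def by (intro sum.cong refl) (rule Cons.IH[OF cs])
  also have "\<dots> = real n * ((1 - q) * (real n ^ k' * G c) + q * (real n ^ k' * G (- c)))"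
    unfolding q_def by (subst sum_nth_cube[OF x]) simp
  also have "\<dots> = real n ^ k * measure_pmf.expectation (flip_pmf q (c # cs)) Q"
    using neg_fraction_bounds[OF n] unfolding k G_def q_def
    by (subst expectation_flip_pmf_Cons) (auto simp: algebra_simps)
  finally show ?case by (simp add: q_def)
qed

lemma sum_distinct_index_tuples_restrict_str_le:
  fixes Q :: "int list \<Rightarrow> real"
  assumes x: "x \<in> cube n" and n: "n > 0" and y: "y \<in> cube k"
  defines "D \<equiv> distinct_index_tuples k n"
  shows "(\<Sum>a\<in>D. Q (restrict_str x (a, y))) \<le>
    real (card D) * measure_pmf.expectation (flip_pmf (neg_fraction n x) y) Q
    + 2 * cube_abs_sum k Q * (real n ^ k - real (card D))"
proof -
  define G where "G = measure_pmf.expectation (flip_pmf (neg_fraction n x) y) Q"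
  define M where "M = cube_abs_sum k Q"
  define L where "L = index_tuples k n"
  have DL: "D \<subseteq> L" "finite L" unfolding D_def L_def
    by (rule distinct_index_tuples_subset, rule finite_index_tuples)
  have cD: "real (card D) \<le> real n ^ k"
    unfolding D_def by (metis card_distinct_index_tuples_le of_nat_le_iff of_nat_power)
  have G: "G \<le> M"
    using abs_expectation_le_cube_abs_sum[OF set_flip_pmf_cube[OF y, of "neg_fraction n x"], of Q]
    unfolding G_def M_def by (rule abs_le_D1)
  have lower: "- M \<le> Q (restrict_str x (a, y))" if "a \<in> L" for a
    using abs_le_cube_abs_sum[OF restrict_str_in_cube[of a k y n x], of Q] that y x
    unfolding L_def index_tuples_def cube_def M_def by auto
  have "(\<Sum>a\<in>D. Q (restrict_str x (a, y))) =
      (\<Sum>a\<in>L. Q (restrict_str x (a, y))) - (\<Sum>a\<in>L - D. Q (restrict_str x (a, y)))"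
    using DL by (simp add: sum_diff)
  also have "\<dots> \<le> real n ^ k * G - (\<Sum>a\<in>L - D. - M)"
    using sum_index_tuples_restrict_str[OF x n, of y k Q] y lower
    unfolding G_def L_def cube_def by (intro diff_mono sum_mono) auto
  also have "\<dots> = real n ^ k * G + M * (real n ^ k - real (card D))"
    using DL card_mono[OF DL(2,1)]
    by (simp add: card_Diff_subset finite_subset card_index_tuples L_def of_nat_diff algebra_simps)
  also have "\<dots> \<le> real (card D) * G + 2 * M * (real n ^ k - real (card D))"
    using mult_left_mono[OF G, of "real n ^ k - real (card D)"] cD by (simp add: algebra_simps)
  finally show ?thesis unfolding G_def M_def .
qed

definition weighted_instance ::
    "(int list \<Rightarrow> nat) \<Rightarrow> int list list \<Rightarrow> nat list list \<Rightarrow> (nat list \<times> int list) list" where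
  "weighted_instance c ys as = concat (map (\<lambda>y. concat (replicate (c y) (map (\<lambda>a. (a, y)) as))) ys)"

lemma set_weighted_instance: "set (weighted_instance c ys as) \<subseteq> set as \<times> set ys"
  by (auto simp: weighted_instance_def split: if_splits)

lemma sum_list_weighted_instance:
  fixes F :: "nat list \<times> int list \<Rightarrow> real"
  assumes "distinct ys" "distinct as"
  shows "(\<Sum>x\<leftarrow>weighted_instance c ys as. F x) = (\<Sum>y\<in>set ys. real (c y) * (\<Sum>a\<in>set as. F (a, y)))"
proof -
  have sum_list_concat: "(\<Sum>x\<leftarrow>concat xss. F x) = (\<Sum>xs\<leftarrow>xss. \<Sum>x\<leftarrow>xs. F x)" for xss
    by (induction xss) auto
  show ?thesis
    using assms by (simp add: weighted_instance_def sum_list_concat o_def sum_list_replicate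
        sum_list_distinct_conv_sum_set)
qed

lemma length_weighted_instance:
  "distinct ys \<Longrightarrow> length (weighted_instance c ys as) = (\<Sum>y\<in>set ys. c y) * length as"
  by (simp add: weighted_instance_def length_concat o_def sum_list_replicate
      sum_list_distinct_conv_sum_set sum_distrib_right)

lemma valid_weighted_instance:
  assumes "set ys \<subseteq> cube k" "set as \<subseteq> distinct_index_tuples k n" "weighted_instance c ys as \<noteq> []"
  shows "valid_instance k n (weighted_instance c ys as)"
  using assms set_weighted_instance[of c ys as]
  unfolding valid_instance_def valid_constraint_def distinct_index_tuples_def cube_def by fastforce

lemma inst_opt_eq_1_if_satisfied:
  fixes P :: "int list \<Rightarrow> real"
  assumes v: "valid_instance k n I" and P_le: "\<And>x. x \<in> cube k \<Longrightarrow> P x \<le> 1"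
    and z: "z \<in> cube n" and sat: "\<And>c. c \<in> set I \<Longrightarrow> P (restrict_str z c) = 1"
  shows "inst_opt n P I = 1"
proof (rule antisym)
  have m: "0 < real (length I)" using v by (simp add: valid_instance_def)
  have vc: "\<And>c. c \<in> set I \<Longrightarrow> valid_constraint k n c" using v by (simp add: valid_instance_def)
  show "inst_opt n P I \<le> 1"
  proof (rule inst_opt_le)
    fix x assume "x \<in> cube n"
    then have "(\<Sum>c\<leftarrow>I. P (restrict_str x c)) \<le> (\<Sum>c\<leftarrow>I. 1)"
      using vc by (intro sum_list_mono P_le restrict_str_in_cube_valid) auto
    then show "inst_value P I x \<le> 1"
      using m by (simp add: inst_value_def sum_list_triv)
  qed
  have "inst_value P I z = 1"
    using m sat by (simp add: inst_value_def sum_list_triv cong: map_cong)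
  then show "1 \<le> inst_opt n P I"
    using inst_value_le_inst_opt[OF z] by metis
qed

lemma inst_value_weighted_instance_le:
  fixes Q :: "int list \<Rightarrow> real" and c :: "int list \<Rightarrow> nat"
  assumes ys: "set ys \<subseteq> cube k" "distinct ys"
    and as: "set as = distinct_index_tuples k n" "distinct as"
    and n: "k < n" and z: "z \<in> cube n" and T: "0 < (\<Sum>y\<in>set ys. c y)"
  defines "cD \<equiv> real (card (distinct_index_tuples k n))"
  shows "inst_value Q (weighted_instance c ys as) z \<le>
    (\<Sum>y\<in>set ys. real (c y) * measure_pmf.expectation (flip_pmf (neg_fraction n z) y) Q)
      / real (\<Sum>y\<in>set ys. c y)
    + 2 * cube_abs_sum k Q * (real n ^ k / cD - 1)"
proof -
  define T where "T = real (\<Sum>y\<in>set ys. c y)"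
  define G where "G y = measure_pmf.expectation (flip_pmf (neg_fraction n z) y) Q" for y
  define A where "A y = (\<Sum>a\<in>set as. Q (restrict_str z (a, y)))" for y
  define err where "err = 2 * cube_abs_sum k Q * (real n ^ k - cD)"
  have "0 < real (n - k) ^ k" using n by simp
  also have "\<dots> \<le> cD"
    unfolding cD_def by (metis card_distinct_index_tuples_ge less_imp_le_nat of_nat_le_iff of_nat_power n)
  finally have cD: "0 < cD" .
  have Tpos: "0 < T" using T by (simp add: T_def del: of_nat_sum)
  have A: "A y \<le> cD * G y + err" if "y \<in> set ys" for y
    using sum_distinct_index_tuples_restrict_str_le[OF z _, of y k Q] that ys n as(1)
    unfolding A_def G_def cD_def err_def by auto
  have "real (length (weighted_instance c ys as)) = T * cD"
    using distinct_card[OF as(2)] as(1) by (simp add: length_weighted_instance[OF ys(2)] T_def cD_def)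
  then have "inst_value Q (weighted_instance c ys as) z = (\<Sum>y\<in>set ys. real (c y) * A y) / (T * cD)"
    by (simp add: inst_value_def sum_list_weighted_instance[OF ys(2) as(2)] A_def)
  also have "\<dots> \<le> (\<Sum>y\<in>set ys. real (c y) * (cD * G y + err)) / (T * cD)"
    using Tpos cD by (intro divide_right_mono sum_mono mult_left_mono A) auto
  also have "\<dots> = (\<Sum>y\<in>set ys. real (c y) * G y) / T + err / cD"
    using Tpos cD
    by (simp add: T_def sum.distrib sum_distrib_left sum_distrib_right field_simps flip: sum_divide_distrib)
  also have "err / cD = 2 * cube_abs_sum k Q * (real n ^ k / cD - 1)"
    using cD by (simp add: err_def field_simps)
  finally show ?thesis by (simp add: G_def T_def)
qed

text \<open>Since \<open>c \<approx> N \<mu>\<close>, the left-hand side is about \<open>N\<close> times the \<open>Q\<close>-value of \<open>\<mu>\<^sup>q\<close>,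
  which is at most \<open>N Opt(Q, \<mu>)\<close>.\<close>

lemma sum_rounded_weights_le:
  fixes Q :: "int list \<Rightarrow> real" and c :: "int list \<Rightarrow> nat" and N :: real
  assumes S: "finite S" "S \<subseteq> cube k" "set_pmf \<mu> \<subseteq> S" and opt: "Opt Q \<mu> \<le> E_unif k Q"
    and q: "q \<in> {0..1}" and N: "0 \<le> N" and c: "\<And>y. \<bar>real (c y) - N * pmf \<mu> y\<bar> \<le> 1"
  shows "(\<Sum>y\<in>S. real (c y) * measure_pmf.expectation (flip_pmf q y) Q)
    \<le> real (\<Sum>y\<in>S. c y) * E_unif k Q + 2 * cube_abs_sum k Q * real (card S)"
proof -
  define E where "E = E_unif k Q"
  define M where "M = cube_abs_sum k Q"
  define G where "G y = measure_pmf.expectation (flip_pmf q y) Q" for y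
  have \<mu>: "set_pmf \<mu> \<subseteq> cube k" using S by auto
  have sum1: "(\<Sum>y\<in>S. pmf \<mu> y) = 1" using S(1,3) by (rule sum_pmf_eq_1)
  have "(\<Sum>y\<in>S. pmf \<mu> y * G y) = measure_pmf.expectation (noisy \<mu> q) Q"
    using S finite_subset[OF \<mu> finite_cube]
    by (simp add: expectation_noisy expectation_pmf_finite_support G_def)
  also have "\<dots> \<le> E" using expectation_noisy_le_Opt[OF \<mu> q, of Q] opt by (simp add: E_def)
  finally have noisy: "N * (\<Sum>y\<in>S. pmf \<mu> y * G y - pmf \<mu> y * E) \<le> 0"
    using N by (simp add: sum_subtractf sum_distrib_right[symmetric] sum1 mult_nonneg_nonpos)
  have GE: "\<bar>G y - E\<bar> \<le> 2 * M" if "y \<in> S" for y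
    using abs_expectation_le_cube_abs_sum[OF set_flip_pmf_cube, of y k q Q] abs_E_unif_le_cube_abs_sum[of k Q] that S
    unfolding G_def E_def M_def by auto
  have "(\<Sum>y\<in>S. real (c y) * G y) - real (\<Sum>y\<in>S. c y) * E =
      N * (\<Sum>y\<in>S. pmf \<mu> y * G y - pmf \<mu> y * E) + (\<Sum>y\<in>S. (real (c y) - N * pmf \<mu> y) * (G y - E))"
    by (simp add: sum_distrib_left sum_distrib_right sum_subtractf sum.distrib algebra_simps)
  also have "\<dots> \<le> 0 + (\<Sum>y\<in>S. 2 * M)"
  proof (rule add_mono[OF noisy sum_mono])
    fix y assume y: "y \<in> S"
    have "(real (c y) - N * pmf \<mu> y) * (G y - E) \<le> \<bar>real (c y) - N * pmf \<mu> y\<bar> * \<bar>G y - E\<bar>"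
      by (metis abs_ge_self abs_mult)
    also have "\<dots> \<le> 1 * (2 * M)"
      by (intro mult_mono c GE y) auto
    finally show "(real (c y) - N * pmf \<mu> y) * (G y - E) \<le> 2 * M" by simp
  qed
  finally show ?thesis by (simp add: E_def M_def G_def algebra_simps)
qed

lemma abs_nat_floor_diff_le: "0 \<le> x \<Longrightarrow> \<bar>real (nat \<lfloor>x\<rfloor>) - x\<bar> \<le> 1"
  by linarith

lemma filterlim_sum_rounded_weights_at_top:
  assumes "finite S" "set_pmf \<mu> \<subseteq> S"
  shows "filterlim (\<lambda>N. real (\<Sum>y\<in>S. nat \<lfloor>real N * pmf \<mu> y\<rfloor>)) at_top sequentially"
proof (rule filterlim_at_top_mono)
  show "filterlim (\<lambda>N. - real (card S) + real N) at_top sequentially"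
    by (rule filterlim_tendsto_add_at_top[OF tendsto_const filterlim_real_sequentially])
  show "\<forall>\<^sub>F N in sequentially. - real (card S) + real N \<le> real (\<Sum>y\<in>S. nat \<lfloor>real N * pmf \<mu> y\<rfloor>)"
  proof (intro always_eventually allI)
    fix N :: nat
    have "- real (card S) + real N = (\<Sum>y\<in>S. real N * pmf \<mu> y - 1)"
      using assms by (simp add: sum_subtractf sum_distrib_left[symmetric] sum_pmf_eq_1)
    also have "\<dots> \<le> (\<Sum>y\<in>S. real (nat \<lfloor>real N * pmf \<mu> y\<rfloor>))"
    proof (rule sum_mono)
      fix y
      have "\<bar>real (nat \<lfloor>real N * pmf \<mu> y\<rfloor>) - real N * pmf \<mu> y\<bar> \<le> 1"
        by (intro abs_nat_floor_diff_le) simp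
      then show "real N * pmf \<mu> y - 1 \<le> real (nat \<lfloor>real N * pmf \<mu> y\<rfloor>)" by linarith
    qed
    finally show "- real (card S) + real N \<le> real (\<Sum>y\<in>S. nat \<lfloor>real N * pmf \<mu> y\<rfloor>)"
      by simp
  qed
qed

lemma inst_opt_weighted_instance_le:
  fixes Q :: "int list \<Rightarrow> real" and c :: "int list \<Rightarrow> nat" and N :: real
  assumes ys: "set ys \<subseteq> cube k" "distinct ys" "set_pmf \<mu> \<subseteq> set ys" and opt: "Opt Q \<mu> \<le> E_unif k Q"
    and as: "set as = distinct_index_tuples k n" "distinct as" and n: "k < n"
    and N: "0 \<le> N" and c: "\<And>y. \<bar>real (c y) - N * pmf \<mu> y\<bar> \<le> 1" and T: "0 < (\<Sum>y\<in>set ys. c y)"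
  shows "inst_opt n Q (weighted_instance c ys as) \<le> E_unif k Q
    + 2 * cube_abs_sum k Q * real (length ys) / real (\<Sum>y\<in>set ys. c y)
    + 2 * cube_abs_sum k Q * (real n ^ k / real (card (distinct_index_tuples k n)) - 1)"
proof (rule inst_opt_le)
  fix z assume z: "z \<in> cube n"
  define T where "T = real (\<Sum>y\<in>set ys. c y)"
  have Tpos: "0 < T" using T by (simp add: T_def del: of_nat_sum)
  have q: "neg_fraction n z \<in> {0..1}" using neg_fraction_bounds[of n z] n by auto
  have "(\<Sum>y\<in>set ys. real (c y) * measure_pmf.expectation (flip_pmf (neg_fraction n z) y) Q) / T
      \<le> (T * E_unif k Q + 2 * cube_abs_sum k Q * real (length ys)) / T"
    using sum_rounded_weights_le[OF finite_set ys(1,3) opt q N c] Tpos distinct_card[OF ys(2)]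
    by (intro divide_right_mono) (auto simp: T_def)
  also have "\<dots> = E_unif k Q + 2 * cube_abs_sum k Q * real (length ys) / T"
    using Tpos by (simp add: field_simps)
  finally show "inst_value Q (weighted_instance c ys as) z \<le> E_unif k Q
    + 2 * cube_abs_sum k Q * real (length ys) / real (\<Sum>y\<in>set ys. c y)
    + 2 * cube_abs_sum k Q * (real n ^ k / real (card (distinct_index_tuples k n)) - 1)"
    using inst_value_weighted_instance_le[OF ys(1,2) as n z T, of Q] unfolding T_def by linarith
qed

lemma weighted_instance_satisfiable:
  fixes P :: "int list \<Rightarrow> real"
  assumes P01: "\<forall>x\<in>cube k. P x \<in> {0, 1}" and ys: "set ys \<subseteq> {x \<in> cube k. P x = 1}" "distinct ys"
    and as: "set as = distinct_index_tuples k n" "distinct as" and n: "k < n"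
    and T: "0 < (\<Sum>y\<in>set ys. c y)"
  shows "valid_instance k n (weighted_instance c ys as) \<and> inst_opt n P (weighted_instance c ys as) = 1"
proof
  define I where "I = weighted_instance c ys as"
  have "0 < (n - k) ^ k" using n by simp
  also have "\<dots> \<le> card (distinct_index_tuples k n)" using n by (intro card_distinct_index_tuples_ge) simp
  also have "\<dots> = length as" using as distinct_card by metis
  finally have "0 < length I"
    using T by (simp add: I_def length_weighted_instance[OF ys(2)])
  then show v: "valid_instance k n I"
    unfolding I_def using ys as by (intro valid_weighted_instance) auto
  have "P (restrict_str (replicate n 1) (a, y)) = 1" if "(a, y) \<in> set I" for a y
  proof -
    have "a \<in> distinct_index_tuples k n" "y \<in> set ys"
      using that set_weighted_instance[of c ys as] as(1) unfolding I_def by blast+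
    then show ?thesis
      using ys(1) by (subst restrict_str_replicate_one) (auto simp: distinct_index_tuples_def cube_def)
  qed
  then show "inst_opt n P I = 1"
    using P01 by (intro inst_opt_eq_1_if_satisfied[OF v _ replicate_one_in_cube]) fastforce+
qed

lemma Opt_eq_E_unif_imp_useless:
  fixes P Q :: "int list \<Rightarrow> real"
  assumes P01: "\<forall>x\<in>cube k. P x \<in> {0, 1}"
    and supp: "set_pmf \<mu> \<subseteq> {x \<in> cube k. P x = 1}" and opt: "Opt Q \<mu> = E_unif k Q"
  shows "useless k P Q"
  unfolding useless_def
proof (intro allI impI)
  fix \<epsilon> :: real assume \<epsilon>: "\<epsilon> > 0"
  have "finite {x \<in> cube k. P x = 1}" using finite_cube by simp
  then obtain ys where ys: "set ys = {x \<in> cube k. P x = 1}" "distinct ys"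
    using finite_distinct_list by blast
  define M where "M = cube_abs_sum k Q"
  define c where "c N y = nat \<lfloor>real N * pmf \<mu> y\<rfloor>" for N y
  define D where "D n = distinct_index_tuples k n" for n
  have T_lim: "filterlim (\<lambda>N. real (\<Sum>y\<in>set ys. c N y)) at_top sequentially"
    unfolding c_def using supp ys finite_cube by (intro filterlim_sum_rounded_weights_at_top) auto
  then have "((\<lambda>N. 2 * M * real (length ys) / real (\<Sum>y\<in>set ys. c N y)) \<longlongrightarrow> 0) sequentially"
    by (intro tendsto_divide_0[OF tendsto_const] filterlim_at_top_imp_at_infinity)
  then obtain N where N: "2 * M * real (length ys) / real (\<Sum>y\<in>set ys. c N y) < \<epsilon> / 2"
    "0 < (\<Sum>y\<in>set ys. c N y)"
    using eventually_conj[OF order_tendstoD(2)[of _ 0 _ "\<epsilon> / 2"]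
        filterlim_at_top_dense[THEN iffD1, rule_format, OF T_lim, of 0]] \<epsilon>
    unfolding eventually_sequentially by fastforce
  have "(\<lambda>n. inverse (real (card (D n)) / real n ^ k)) \<longlonglongrightarrow> inverse 1"
    unfolding D_def by (intro tendsto_inverse tendsto_card_distinct_index_tuples) simp
  then have "(\<lambda>n. 2 * M * (real n ^ k / real (card (D n)) - 1)) \<longlonglongrightarrow> 2 * M * (1 - 1)"
    by (intro tendsto_mult tendsto_diff tendsto_const) simp
  then obtain n where n: "2 * M * (real n ^ k / real (card (D n)) - 1) < \<epsilon> / 2" "k < n"
    using eventually_conj[OF order_tendstoD(2)[of _ 0 _ "\<epsilon> / 2"] eventually_gt_at_top[of k]] \<epsilon>
    unfolding eventually_sequentially by fastforce
  obtain as where as: "set as = D n" "distinct as"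
    using finite_distinct_list[of "D n"] finite_distinct_index_tuples unfolding D_def by blast
  define I where "I = weighted_instance (c N) ys as"
  have "valid_instance k n I \<and> inst_opt n P I = 1"
    unfolding I_def using ys as N(2) n(2) by (intro weighted_instance_satisfiable[OF P01]) (auto simp: D_def)
  moreover have "\<bar>real (c N y) - real N * pmf \<mu> y\<bar> \<le> 1" for y
    unfolding c_def by (intro abs_nat_floor_diff_le) simp
  then have "inst_opt n Q I \<le> E_unif k Q
      + 2 * M * real (length ys) / real (\<Sum>y\<in>set ys. c N y)
      + 2 * M * (real n ^ k / real (card (D n)) - 1)"
    unfolding I_def M_def D_def using ys supp opt as[unfolded D_def] n(2) N(2)
    by (intro inst_opt_weighted_instance_le[where N = "real N"]) auto
  ultimately show "\<exists>n I. valid_instance k n I \<and> inst_opt n P I = 1 \<and> inst_opt n Q I \<le> E_unif k Q + \<epsilon>"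
    using N(1) n(1) by force
qed

theorem theorem3p2:
  fixes k :: nat and P Q :: "int list \<Rightarrow> real"
  assumes "\<forall>x\<in>cube k. P x \<in> {0, 1}"
  shows "useless k P Q \<longleftrightarrow>
    (\<exists>\<mu> :: int list pmf. set_pmf \<mu> \<subseteq> {x \<in> cube k. P x = 1} \<and> Opt Q \<mu> = E_unif k Q)"
  using useless_imp_Opt_eq_E_unif[OF assms] Opt_eq_E_unif_imp_useless[OF assms] by blast

end
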